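(* Assume Hypothesis 1 (stated in the context). Suppose further that $C\ne C_{\max}$, let $n$ be the integer with $|C|=n|C_{\max}|$, and let $\langle C\rangle$ be the $\mathbb F_2$-span of the codewords of $C$. Then: 1. $\mathrm{Aut}(C)\le\mathrm{Aut}(\langle C\rangle)$; 2. $\langle C\rangle$ is completely transitive; 3. the codimension of $C_{\max}$ in $\langle C\rangle$ is at least $2$ and at most $n-1$.
   Context: $H(m,2)$: vertex set $\mathbb F_2^m$, coordinates indexed by a set $M$, $|M|=m$; $d$ Hamming distance. For a code $C$: minimum distance $\delta$, covering radius $\rho=\max_\alpha d(\alpha,C)$, $C_i=\{\alpha:d(\alpha,C)=i\}$. $\mathrm{Aut}(H(m,2))=B\rtimes L$, $B\cong\mathbb Z_2^m$ translations, $L\cong\mathrm{Sym}(M)$; $\mathrm{Aut}(C)$ is the setwise stabiliser of $C$. $C$ is completely transitive if $\mathrm{Aut}(C)$ is transitive on each of $C,C_1,\dots,C_\rho$. For a linear code $D$, $T_D$ is the group of translations by elements of $D$. For $C\ni\mathbf 0$, the maximal linear subcode $C_{\max}$ is the largest linear subcode $D\subseteq C$ with $T_D\le\mathrm{Aut}(C)$. Hypothesis 1: $C$ is a completely transitive code in $H(m,2)$ with $\mathbf 0\in C$ and minimum distance $\delta\ge5$; $X=\mathrm{Aut}(C)$; $C_{\max}$ is the maximal linear subcode with minimum distance $\delta_{\max}$; $X_{\max}$ is the setwise stabiliser of $C_{\max}$ in $X$; $2\le\dim C_{\max}\le m-2$. *)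

theory Defs
  imports Main "HOL-Combinatorics.Permutations"
begin

text \<open>Vertices of H(m,2) with coordinate set M are the subsets of M
  (a subset is identified with its support / characteristic vector).
  Vector addition over F_2 is symmetric difference; the zero vector is {}.\<close>

definition vadd :: "'a set \<Rightarrow> 'a set \<Rightarrow> 'a set" where
  "vadd x y = (x - y) \<union> (y - x)"

definition hdist :: "'a set \<Rightarrow> 'a set \<Rightarrow> nat" where
  "hdist x y = card (vadd x y)"

definition is_code :: "'a set \<Rightarrow> 'a set set \<Rightarrow> bool" where
  "is_code M C \<longleftrightarrow> C \<subseteq> Pow M \<and> C \<noteq> {}"

definition min_dist :: "'a set set \<Rightarrow> nat" where
  "min_dist C = Min {hdist x y | x y. x \<in> C \<and> y \<in> C \<and> x \<noteq> y}"

definition dist_to_code :: "'a set \<Rightarrow> 'a set set \<Rightarrow> nat" where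
  "dist_to_code a C = Min {hdist a c | c. c \<in> C}"

definition covering_radius :: "'a set \<Rightarrow> 'a set set \<Rightarrow> nat" where
  "covering_radius M C = Max {dist_to_code a C | a. a \<in> Pow M}"

definition dist_class :: "'a set \<Rightarrow> 'a set set \<Rightarrow> nat \<Rightarrow> 'a set set" where
  "dist_class M C i = {a \<in> Pow M. dist_to_code a C = i}"

definition aut_H :: "'a set \<Rightarrow> ('a set \<Rightarrow> 'a set) set" where
  "aut_H M = {g. \<exists>\<sigma> b. \<sigma> permutes M \<and> b \<subseteq> M \<and> g = (\<lambda>x. vadd (\<sigma> ` x) b)}"

definition aut_code :: "'a set \<Rightarrow> 'a set set \<Rightarrow> ('a set \<Rightarrow> 'a set) set" where
  "aut_code M C = {g \<in> aut_H M. g ` C = C}"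

definition completely_transitive :: "'a set \<Rightarrow> 'a set set \<Rightarrow> bool" where
  "completely_transitive M C \<longleftrightarrow>
     (\<forall>i \<le> covering_radius M C. \<forall>a \<in> dist_class M C i. \<forall>b \<in> dist_class M C i.
        \<exists>g \<in> aut_code M C. g a = b)"

definition linear_code :: "'a set \<Rightarrow> 'a set set \<Rightarrow> bool" where
  "linear_code M D \<longleftrightarrow> D \<subseteq> Pow M \<and> {} \<in> D \<and> (\<forall>x \<in> D. \<forall>y \<in> D. vadd x y \<in> D)"

definition translation :: "'a set \<Rightarrow> 'a set \<Rightarrow> 'a set" where
  "translation d = (\<lambda>x. vadd x d)"

definition translations_in_aut :: "'a set \<Rightarrow> 'a set set \<Rightarrow> 'a set set \<Rightarrow> bool" where
  "translations_in_aut M D C \<longleftrightarrow> (\<forall>d \<in> D. translation d \<in> aut_code M C)"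

definition is_max_linear_subcode :: "'a set \<Rightarrow> 'a set set \<Rightarrow> 'a set set \<Rightarrow> bool" where
  "is_max_linear_subcode M C D \<longleftrightarrow>
     linear_code M D \<and> D \<subseteq> C \<and> translations_in_aut M D C \<and>
     (\<forall>D'. linear_code M D' \<and> D' \<subseteq> C \<and> translations_in_aut M D' C \<longrightarrow> D' \<subseteq> D)"

definition f2_span :: "'a set \<Rightarrow> 'a set set \<Rightarrow> 'a set set" where
  "f2_span M C = \<Inter> {D. linear_code M D \<and> C \<subseteq> D}"

definition code_dim :: "'a set set \<Rightarrow> nat" where
  "code_dim D = (THE k. card D = 2 ^ k)"

end

theory Submission
  imports Defs
begin

(* An automorphism of C has the form x |-> s(x) + b with s a coordinate permutation, and
   b = g(0) lies in C. Hence s maps C, and therefore its span <C>, into <C>, so g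
   preserves <C>.

   A word a at distance i from the linear code <C> can be translated by a nearest
   codeword of <C>; the result is at distance i from <C> with nearest codeword 0, which
   lies in C, so it is at distance i from C as well. Translations by elements of <C>
   are automorphisms of <C>, so complete transitivity of C transfers to <C>.

   Translations by C_max preserve C, so C is a disjoint union of n cosets of C_max,
   one of which is C_max; hence <C> is spanned by C_max and n - 1 more words, and the
   codimension is at most n - 1. If it were at most 1, then C, which contains C_max
   and a second coset, would fill <C>; so C would be linear, contradicting the
   maximality of C_max. *)

lemma vadd_comm: "vadd x y = vadd y x"
  unfolding vadd_def by blast

lemma vadd_assoc: "vadd (vadd x y) z = vadd x (vadd y z)"
  unfolding vadd_def by blast

lemma vadd_empty [simp]: "vadd x {} = x" "vadd {} x = x"
  unfolding vadd_def by blast+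

lemma vadd_cancel_right [simp]: "vadd (vadd x y) y = x"
  unfolding vadd_def by blast

lemma vadd_cancel_left [simp]: "vadd x (vadd x y) = y"
  unfolding vadd_def by blast

lemma vadd_subset: "x \<subseteq> M \<Longrightarrow> y \<subseteq> M \<Longrightarrow> vadd x y \<subseteq> M"
  unfolding vadd_def by blast

lemma image_vadd: "inj s \<Longrightarrow> s ` vadd x y = vadd (s ` x) (s ` y)"
  unfolding vadd_def by (auto simp: inj_eq image_set_diff)

lemma inj_translation: "inj (translation d)"
  unfolding translation_def by (metis injI vadd_cancel_right)

lemma linear_code_vadd: "linear_code M D \<Longrightarrow> x \<in> D \<Longrightarrow> y \<in> D \<Longrightarrow> vadd x y \<in> D"
  unfolding linear_code_def by blast

lemma linear_code_empty: "linear_code M D \<Longrightarrow> {} \<in> D"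
  unfolding linear_code_def by blast

lemma linear_code_subset_Pow: "linear_code M D \<Longrightarrow> D \<subseteq> Pow M"
  unfolding linear_code_def by blast

lemma finite_linear_code: "finite M \<Longrightarrow> linear_code M D \<Longrightarrow> finite D"
  using finite_subset linear_code_subset_Pow by blast

lemma translation_image_linear_code:
  "linear_code M D \<Longrightarrow> d \<in> D \<Longrightarrow> translation d ` D \<subseteq> D"
  unfolding translation_def using linear_code_vadd by blast

lemma linear_code_Un_coset:
  assumes lin: "linear_code M H" and "v \<subseteq> M"
  shows "linear_code M (H \<union> translation v ` H)"
proof -
  have "vadd x y \<in> H \<union> translation v ` H"
    if x: "x \<in> H \<union> translation v ` H" and y: "y \<in> H \<union> translation v ` H" for x y
  proof -
    obtain a where "a \<in> H" "x = a \<or> x = vadd a v"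
      using x unfolding translation_def by blast
    moreover obtain b where "b \<in> H" "y = b \<or> y = vadd b v"
      using y unfolding translation_def by blast
    moreover have "vadd a (vadd b v) = vadd (vadd a b) v" "vadd (vadd a v) b = vadd (vadd a b) v"
      "vadd (vadd a v) (vadd b v) = vadd a b" for a b :: "'a set"
      unfolding vadd_def by blast+
    ultimately show ?thesis
      using linear_code_vadd[OF lin, of a b] unfolding translation_def by auto
  qed
  moreover have "translation v ` H \<subseteq> Pow M"
    using linear_code_subset_Pow[OF lin] vadd_subset[OF _ \<open>v \<subseteq> M\<close>]
    unfolding translation_def by blast
  ultimately show ?thesis
    using lin unfolding linear_code_def by blast
qed

lemma disjoint_coset:
  assumes "linear_code M H" "v \<notin> H"
  shows "H \<inter> translation v ` H = {}"
proof (rule ccontr)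
  assume "H \<inter> translation v ` H \<noteq> {}"
  then obtain a b where "a \<in> H" "b \<in> H" "a = vadd b v"
    unfolding translation_def by blast
  then have "v \<in> H"
    using linear_code_vadd[OF assms(1), of b a] by simp
  with assms(2) show False ..
qed

lemma card_Un_coset:
  assumes "finite H" "linear_code M H" "v \<notin> H"
  shows "card (H \<union> translation v ` H) = 2 * card H"
proof -
  have "card (translation v ` H) = card H"
    using card_image inj_on_subset inj_translation by blast
  then show ?thesis
    using assms(1) disjoint_coset[OF assms(2,3)] by (simp add: card_Un_disjoint)
qed

lemma card_Un_coset_le:
  "finite H \<Longrightarrow> card (H \<union> translation v ` H) \<le> 2 * card H"
  using card_Un_le[of H "translation v ` H"] card_image_le[of H "translation v"] by simp

lemma linear_code_index_power_of_two:
  assumes "finite D" "linear_code M D" "linear_code M H" "H \<subseteq> D"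
  shows "\<exists>j. card D = 2 ^ j * card H"
  using assms
proof (induction "card D - card H" arbitrary: H rule: less_induct)
  case less
  show ?case
  proof (cases "H = D")
    case True
    then show ?thesis by (intro exI[of _ 0]) simp
  next
    case False
    then obtain v where v: "v \<in> D" "v \<notin> H" using less.prems(4) by blast
    let ?H' = "H \<union> translation v ` H"
    have fH: "finite H" using less.prems(1,4) finite_subset by blast
    have lin': "linear_code M ?H'"
      using linear_code_Un_coset[OF less.prems(3)] linear_code_subset_Pow[OF less.prems(2)] v(1)
      by blast
    have "translation v ` H \<subseteq> D"
      using less.prems(4) translation_image_linear_code[OF less.prems(2) v(1)]
      unfolding translation_def by (auto simp: vadd_comm)
    then have sub': "?H' \<subseteq> D" using less.prems(4) by blast
    have card': "card ?H' = 2 * card H"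
      using card_Un_coset[OF fH less.prems(3) v(2)] .
    have "card H > 0" using fH linear_code_empty[OF less.prems(3)] card_gt_0_iff by blast
    then have "card D - card ?H' < card D - card H"
      using card_mono[OF less.prems(1) sub'] card' by linarith
    then have "\<exists>j. card D = 2 ^ j * card ?H'"
      by (rule less.hyps[OF _ less.prems(1,2) lin' sub'])
    then obtain j where "card D = 2 ^ j * card ?H'" ..
    then show ?thesis using card' by (intro exI[of _ "Suc j"]) simp
  qed
qed

lemma code_dim_eq: "card D = 2 ^ k \<Longrightarrow> code_dim D = k"
  unfolding code_dim_def by (rule the_equality) auto

lemma card_linear_code_eq_code_dim:
  assumes "finite D" "linear_code M D"
  shows "card D = 2 ^ code_dim D"
proof -
  have zero: "linear_code M {{}}" unfolding linear_code_def by simp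
  have "{{}} \<subseteq> D" using linear_code_empty[OF assms(2)] by blast
  then obtain k where "card D = 2 ^ k"
    using linear_code_index_power_of_two[OF assms zero] by auto
  then show ?thesis using code_dim_eq[of D k] by simp
qed

lemma linear_code_f2_span:
  assumes "C \<subseteq> Pow M"
  shows "linear_code M (f2_span M C)"
proof -
  have "linear_code M (Pow M)"
    unfolding linear_code_def by (auto simp: vadd_subset)
  then have "f2_span M C \<subseteq> Pow M"
    unfolding f2_span_def using assms by blast
  moreover have "{} \<in> f2_span M C"
    unfolding f2_span_def linear_code_def by blast
  moreover have "\<forall>x \<in> f2_span M C. \<forall>y \<in> f2_span M C. vadd x y \<in> f2_span M C"
    unfolding f2_span_def linear_code_def by blast
  ultimately show ?thesis
    unfolding linear_code_def by blast
qed

lemma f2_span_superset: "C \<subseteq> f2_span M C"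
  unfolding f2_span_def by blast

lemma f2_span_least: "linear_code M D \<Longrightarrow> C \<subseteq> D \<Longrightarrow> f2_span M C \<subseteq> D"
  unfolding f2_span_def by blast

lemma f2_span_linear_code: "linear_code M D \<Longrightarrow> f2_span M D = D"
  by (simp add: f2_span_least f2_span_superset subset_antisym)

lemma f2_span_image_subset:
  assumes "C \<subseteq> Pow M" "inj s" "(\<lambda>x. s ` x) ` C \<subseteq> f2_span M C"
  shows "(\<lambda>x. s ` x) ` f2_span M C \<subseteq> f2_span M C"
proof -
  let ?S = "f2_span M C"
  have lin: "linear_code M ?S" using linear_code_f2_span[OF assms(1)] .
  have "linear_code M {x \<in> ?S. s ` x \<in> ?S}"
    using lin linear_code_vadd[OF lin] image_vadd[OF assms(2)]
    unfolding linear_code_def by auto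
  moreover have "C \<subseteq> {x \<in> ?S. s ` x \<in> ?S}"
    using assms(3) f2_span_superset by blast
  ultimately have "?S \<subseteq> {x \<in> ?S. s ` x \<in> ?S}"
    by (rule f2_span_least)
  then show ?thesis by blast
qed

lemma aut_H_inj:
  assumes "g \<in> aut_H M"
  shows "inj g"
proof -
  obtain s b where s: "s permutes M" and g: "g = (\<lambda>x. vadd (s ` x) b)"
    using assms unfolding aut_H_def by blast
  show ?thesis
  proof (rule injI)
    fix x y assume "g x = g y"
    then have "s ` x = s ` y"
      unfolding g by (metis vadd_cancel_right)
    then show "x = y"
      using permutes_inj[OF s] by (simp add: inj_image_eq_iff)
  qed
qed

lemma aut_H_compose:
  assumes "g1 \<in> aut_H M" "g2 \<in> aut_H M"
  shows "g1 \<circ> g2 \<in> aut_H M"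
proof -
  obtain s1 b1 s2 b2
    where s1: "s1 permutes M" "b1 \<subseteq> M" "g1 = (\<lambda>x. vadd (s1 ` x) b1)"
      and s2: "s2 permutes M" "b2 \<subseteq> M" "g2 = (\<lambda>x. vadd (s2 ` x) b2)"
    using assms unfolding aut_H_def by blast
  have "g1 \<circ> g2 = (\<lambda>x. vadd ((s1 \<circ> s2) ` x) (vadd (s1 ` b2) b1))"
  proof
    fix x
    have "(g1 \<circ> g2) x = vadd (vadd (s1 ` s2 ` x) (s1 ` b2)) b1"
      using s1(3) s2(3) image_vadd[OF permutes_inj[OF s1(1)]] by simp
    then show "(g1 \<circ> g2) x = vadd ((s1 \<circ> s2) ` x) (vadd (s1 ` b2) b1)"
      by (simp only: vadd_assoc image_comp)
  qed
  moreover have "s1 \<circ> s2 permutes M"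
    using s1(1) s2(1) by (rule permutes_compose[rotated])
  moreover have "vadd (s1 ` b2) b1 \<subseteq> M"
    using s2(2) permutes_image[OF s1(1)] by (intro vadd_subset[OF _ s1(2)]) blast
  ultimately show ?thesis
    unfolding aut_H_def by blast
qed

lemma translation_in_aut_H: "d \<subseteq> M \<Longrightarrow> translation d \<in> aut_H M"
  unfolding aut_H_def translation_def by (auto intro!: exI[of _ id] permutes_id)

lemma aut_codeI:
  assumes "finite S" "g \<in> aut_H M" "g ` S \<subseteq> S"
  shows "g \<in> aut_code M S"
proof -
  have "inj_on g S" using aut_H_inj[OF assms(2)] inj_on_subset by blast
  then have "g ` S = S" using endo_inj_surj assms(1,3) by blast
  then show ?thesis unfolding aut_code_def using assms(2) by blast
qed

lemma aut_code_compose: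
  "g1 \<in> aut_code M S \<Longrightarrow> g2 \<in> aut_code M S \<Longrightarrow> g1 \<circ> g2 \<in> aut_code M S"
  unfolding aut_code_def using aut_H_compose image_comp by (metis (mono_tags, lifting) mem_Collect_eq)

lemma translation_in_aut_code:
  assumes "finite M" "linear_code M D" "d \<in> D"
  shows "translation d \<in> aut_code M D"
proof (rule aut_codeI[OF finite_linear_code[OF assms(1,2)]])
  show "translation d \<in> aut_H M"
    using linear_code_subset_Pow[OF assms(2)] assms(3) by (blast intro: translation_in_aut_H)
qed (rule translation_image_linear_code[OF assms(2,3)])

theorem aut_code_subset_aut_code_f2_span:
  assumes "finite M" "C \<subseteq> Pow M" "{} \<in> C"
  shows "aut_code M C \<subseteq> aut_code M (f2_span M C)"
proof
  let ?S = "f2_span M C"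
  have lin: "linear_code M ?S" using linear_code_f2_span[OF assms(2)] .
  fix g assume g: "g \<in> aut_code M C"
  then obtain s b where s: "s permutes M" and g_eq: "g = (\<lambda>x. vadd (s ` x) b)"
    and gC: "g ` C = C"
    unfolding aut_code_def aut_H_def by blast
  have "b = g {}" unfolding g_eq by simp
  then have b: "b \<in> ?S" using gC assms(3) f2_span_superset by blast
  have "s ` c \<in> ?S" if "c \<in> C" for c
  proof -
    have "g c \<in> ?S" using that gC f2_span_superset by blast
    then have "vadd (g c) b \<in> ?S" using linear_code_vadd[OF lin _ b] by blast
    then show ?thesis unfolding g_eq by simp
  qed
  then have "(\<lambda>x. s ` x) ` C \<subseteq> ?S" by blast
  then have s_span: "(\<lambda>x. s ` x) ` ?S \<subseteq> ?S"
    by (rule f2_span_image_subset[OF assms(2) permutes_inj[OF s]])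
  have "g x \<in> ?S" if "x \<in> ?S" for x
    unfolding g_eq using linear_code_vadd[OF lin _ b] s_span that by blast
  then have "g ` ?S \<subseteq> ?S" by blast
  moreover have "g \<in> aut_H M" using g unfolding aut_code_def by blast
  ultimately show "g \<in> aut_code M ?S"
    using aut_codeI[OF finite_linear_code[OF assms(1) lin]] by blast
qed

lemma dist_to_code_le: "finite C \<Longrightarrow> c \<in> C \<Longrightarrow> dist_to_code a C \<le> hdist a c"
  unfolding dist_to_code_def by (rule Min_le) auto

lemma dist_to_code_attained:
  assumes "finite C" "C \<noteq> {}"
  obtains c where "c \<in> C" "dist_to_code a C = hdist a c"
proof -
  have "Min {hdist a c |c. c \<in> C} \<in> {hdist a c |c. c \<in> C}"
    using assms by (intro Min_in) auto
  then show ?thesis using that unfolding dist_to_code_def by auto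
qed

lemma dist_to_code_le_covering_radius:
  "finite M \<Longrightarrow> a \<subseteq> M \<Longrightarrow> dist_to_code a C \<le> covering_radius M C"
  unfolding covering_radius_def by (rule Max_ge) auto

lemma dist_class_translate_into_subcode:
  assumes "finite M" "linear_code M S" "C \<subseteq> S" "{} \<in> C" "a \<in> dist_class M S i"
  obtains c where "c \<in> S" "vadd a c \<in> dist_class M C i"
proof -
  have fS: "finite S" using finite_linear_code[OF assms(1,2)] .
  have fC: "finite C" using fS assms(3) finite_subset by blast
  have aM: "a \<subseteq> M" and ai: "dist_to_code a S = i"
    using assms(5) unfolding dist_class_def by auto
  obtain c where c: "c \<in> S" "dist_to_code a S = hdist a c"
    using dist_to_code_attained[OF fS] linear_code_empty[OF assms(2)] by blast
  have "dist_to_code (vadd a c) C \<le> hdist (vadd a c) {}"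
    by (rule dist_to_code_le[OF fC assms(4)])
  also have "\<dots> = i" using ai c(2) by (simp add: hdist_def)
  finally have le: "dist_to_code (vadd a c) C \<le> i" .
  obtain d where d: "d \<in> C" "dist_to_code (vadd a c) C = hdist (vadd a c) d"
    using dist_to_code_attained[OF fC] assms(4) by blast
  have "hdist (vadd a c) d = hdist a (vadd c d)"
    unfolding hdist_def by (simp only: vadd_assoc)
  moreover have "vadd c d \<in> S"
    using linear_code_vadd[OF assms(2) c(1)] d(1) assms(3) by blast
  ultimately have "i \<le> dist_to_code (vadd a c) C"
    using d(2) dist_to_code_le[OF fS, of "vadd c d" a] ai by simp
  moreover have "c \<subseteq> M"
    using c(1) linear_code_subset_Pow[OF assms(2)] by blast
  then have "vadd a c \<subseteq> M"
    using aM by (intro vadd_subset)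
  ultimately show ?thesis
    using that c(1) le unfolding dist_class_def by fastforce
qed

theorem completely_transitive_f2_span:
  assumes "finite M" "C \<subseteq> Pow M" "{} \<in> C" "completely_transitive M C"
  shows "completely_transitive M (f2_span M C)"
  unfolding completely_transitive_def
proof (intro allI impI ballI)
  let ?S = "f2_span M C"
  have lin: "linear_code M ?S" using linear_code_f2_span[OF assms(2)] .
  fix i a b assume a: "a \<in> dist_class M ?S i" and b: "b \<in> dist_class M ?S i"
  obtain ca where ca: "ca \<in> ?S" "vadd a ca \<in> dist_class M C i"
    using dist_class_translate_into_subcode[OF assms(1) lin f2_span_superset assms(3) a] .
  obtain cb where cb: "cb \<in> ?S" "vadd b cb \<in> dist_class M C i"
    using dist_class_translate_into_subcode[OF assms(1) lin f2_span_superset assms(3) b] .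
  have "i \<le> covering_radius M C"
    using ca(2) dist_to_code_le_covering_radius[OF assms(1)] unfolding dist_class_def by auto
  then obtain g where g: "g \<in> aut_code M C" "g (vadd a ca) = vadd b cb"
    using assms(4) ca(2) cb(2) unfolding completely_transitive_def by blast
  let ?h = "translation cb \<circ> g \<circ> translation ca"
  have "?h \<in> aut_code M ?S"
    using aut_code_subset_aut_code_f2_span[OF assms(1-3)] g(1)
      translation_in_aut_code[OF assms(1) lin] ca(1) cb(1)
    by (blast intro: aut_code_compose)
  moreover have "?h a = b"
    using g(2) by (simp add: translation_def)
  ultimately show "\<exists>h \<in> aut_code M ?S. h a = b" by blast
qed

lemma coset_subset:
  assumes "\<And>x d. x \<in> C \<Longrightarrow> d \<in> H \<Longrightarrow> vadd x d \<in> C" "c \<in> C"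
  shows "translation c ` H \<subseteq> C"
proof
  fix x assume "x \<in> translation c ` H"
  then obtain h where "h \<in> H" "x = vadd h c" unfolding translation_def by blast
  then show "x \<in> C" using assms vadd_comm by metis
qed

lemma translation_closed_Diff_coset:
  assumes "linear_code M H" "\<And>x d. x \<in> C \<Longrightarrow> d \<in> H \<Longrightarrow> vadd x d \<in> C"
    and "x \<in> C - translation c ` H" "d \<in> H"
  shows "vadd x d \<in> C - translation c ` H"
proof -
  have "vadd x d \<notin> translation c ` H"
  proof
    assume "vadd x d \<in> translation c ` H"
    then obtain h where h: "h \<in> H" "vadd x d = vadd h c"
      unfolding translation_def by blast
    have "x = vadd (vadd x d) d" by simp
    also have "\<dots> = vadd (vadd h c) d" using h(2) by simp
    also have "\<dots> = vadd (vadd h d) c" unfolding vadd_def by blast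
    finally have "x = vadd (vadd h d) c" .
    moreover have "vadd h d \<in> H" using linear_code_vadd[OF assms(1) h(1) assms(4)] .
    ultimately show False using assms(3) unfolding translation_def by blast
  qed
  then show ?thesis using assms(2-4) by blast
qed

text \<open>Removing a coset \<open>c + H \<noteq> H\<close> from \<open>C\<close> leaves \<open>n - 1\<close> cosets, and adjoining \<open>c\<close> to
  their span at most doubles it.\<close>

lemma card_f2_span_le:
  assumes "finite M" "C \<subseteq> Pow M" "linear_code M H" "H \<subseteq> C"
    and "\<And>x d. x \<in> C \<Longrightarrow> d \<in> H \<Longrightarrow> vadd x d \<in> C"
    and "card C = n * card H"
  shows "card (f2_span M C) \<le> 2 ^ (n - 1) * card H"
  using assms(2,4-6)
proof (induction n arbitrary: C)
  case 0
  have "finite C" using assms(1) "0.prems"(1) finite_subset by blast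
  then have "C = {}" using "0.prems"(4) by simp
  then show ?case using "0.prems"(2) linear_code_empty[OF assms(3)] by blast
next
  case (Suc n)
  have fC: "finite C" using assms(1) Suc.prems(1) finite_subset by blast
  have fH: "finite H" using fC Suc.prems(2) finite_subset by blast
  have H0: "card H > 0" using fH linear_code_empty[OF assms(3)] card_gt_0_iff by blast
  show ?case
  proof (cases "n = 0")
    case True
    then have "C = H" using card_subset_eq[OF fC Suc.prems(2)] Suc.prems(4) by simp
    then show ?thesis using f2_span_linear_code[OF assms(3)] by simp
  next
    case False
    then have "H \<noteq> C" using Suc.prems(4) H0 by auto
    then obtain c where c: "c \<in> C" "c \<notin> H" using Suc.prems(2) by blast
    let ?coset = "translation c ` H" and ?C' = "C - translation c ` H"
    have coset: "?coset \<subseteq> C"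
      using coset_subset[OF Suc.prems(3) c(1)] .
    have "card ?coset = card H"
      using card_image[OF inj_on_subset[OF inj_translation subset_UNIV]] .
    then have card': "card ?C' = n * card H"
      using card_Diff_subset[OF finite_subset[OF coset fC] coset] Suc.prems(4) by simp
    have sub': "?C' \<subseteq> Pow M" using Suc.prems(1) by blast
    have H_sub': "H \<subseteq> ?C'" using Suc.prems(2) disjoint_coset[OF assms(3) c(2)] by blast
    have closed': "vadd x d \<in> ?C'" if "x \<in> ?C'" "d \<in> H" for x d
      using translation_closed_Diff_coset[OF assms(3) Suc.prems(3) that] .
    have IH: "card (f2_span M ?C') \<le> 2 ^ (n - 1) * card H"
      by (rule Suc.IH[OF sub' H_sub' closed' card'])
    let ?D = "f2_span M ?C' \<union> translation c ` f2_span M ?C'"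
    have lin': "linear_code M (f2_span M ?C')"
      using linear_code_f2_span[OF sub'] .
    have "c \<subseteq> M" using c(1) Suc.prems(1) by blast
    then have lin_D: "linear_code M ?D"
      by (rule linear_code_Un_coset[OF lin'])
    have "?C' \<subseteq> f2_span M ?C'" by (rule f2_span_superset)
    then have "C \<subseteq> ?D" using H_sub' by blast
    then have "card (f2_span M C) \<le> card ?D"
      by (rule card_mono[OF finite_linear_code[OF assms(1) lin_D] f2_span_least[OF lin_D]])
    also have "\<dots> \<le> 2 * card (f2_span M ?C')"
      by (rule card_Un_coset_le[OF finite_linear_code[OF assms(1) lin']])
    also have "\<dots> \<le> 2 ^ n * card H"
      using IH False by (cases n) auto
    finally show ?thesis by simp
  qed
qed

lemma card_f2_span_gt:
  assumes "finite M" "C \<subseteq> Pow M" "linear_code M H" "H \<subseteq> C"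
    and "\<And>x d. x \<in> C \<Longrightarrow> d \<in> H \<Longrightarrow> vadd x d \<in> C"
    and "H \<noteq> C" "\<not> linear_code M C"
  shows "2 * card H < card (f2_span M C)"
proof -
  let ?S = "f2_span M C"
  have lin: "linear_code M ?S" using linear_code_f2_span[OF assms(2)] .
  have fS: "finite ?S" using finite_linear_code[OF assms(1) lin] .
  have CS: "C \<subseteq> ?S" by (rule f2_span_superset)
  have fC: "finite C" using finite_subset[OF CS fS] .
  have fH: "finite H" using finite_subset[OF assms(4) fC] .
  obtain c where c: "c \<in> C" "c \<notin> H" using assms(4,6) by blast
  have "H \<union> translation c ` H \<subseteq> C"
    using coset_subset[OF assms(5) c(1)] assms(4) by blast
  then have "card (H \<union> translation c ` H) \<le> card C"
    by (rule card_mono[OF fC])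
  then have "2 * card H \<le> card C"
    using card_Un_coset[OF fH assms(3) c(2)] by simp
  also have "card C < card ?S"
  proof (rule psubset_card_mono[OF fS psubsetI[OF CS]])
    show "C \<noteq> ?S" using lin assms(7) by metis
  qed
  finally show ?thesis .
qed

lemma max_linear_subcode_translation_closed:
  assumes "is_max_linear_subcode M C Cmax" "x \<in> C" "d \<in> Cmax"
  shows "vadd x d \<in> C"
proof -
  have "translation d ` C = C"
    using assms(1,3) unfolding is_max_linear_subcode_def translations_in_aut_def aut_code_def
    by blast
  then show ?thesis using assms(2) unfolding translation_def by blast
qed

lemma max_linear_subcode_eq_if_linear:
  assumes "finite M" "is_max_linear_subcode M C Cmax" "linear_code M C"
  shows "Cmax = C"
proof -
  have "translations_in_aut M C C"
    unfolding translations_in_aut_def using translation_in_aut_code[OF assms(1,3)] by blast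
  then have "C \<subseteq> Cmax"
    using assms(2,3) unfolding is_max_linear_subcode_def by blast
  moreover have "Cmax \<subseteq> C"
    using assms(2) unfolding is_max_linear_subcode_def by blast
  ultimately show ?thesis by blast
qed

theorem codim_max_linear_subcode_in_f2_span:
  assumes "finite M" "C \<subseteq> Pow M" "is_max_linear_subcode M C Cmax" "C \<noteq> Cmax"
    and "card C = n * card Cmax"
  shows "2 \<le> code_dim (f2_span M C) - code_dim Cmax
       \<and> code_dim (f2_span M C) - code_dim Cmax \<le> n - 1"
proof -
  let ?S = "f2_span M C"
  have lin: "linear_code M ?S" using linear_code_f2_span[OF assms(2)] .
  have fS: "finite ?S" using finite_linear_code[OF assms(1) lin] .
  have linX: "linear_code M Cmax" and XC: "Cmax \<subseteq> C"
    using assms(3) unfolding is_max_linear_subcode_def by blast+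
  have fX: "finite Cmax" using finite_linear_code[OF assms(1) linX] .
  have X0: "card Cmax > 0"
    using fX linear_code_empty[OF linX] by (auto simp: card_gt_0_iff)
  note closed = max_linear_subcode_translation_closed[OF assms(3)]
  have "Cmax \<subseteq> ?S" using XC f2_span_superset[of C M] by blast
  then obtain j where j: "card ?S = 2 ^ j * card Cmax"
    using linear_code_index_power_of_two[OF fS lin linX] by blast
  have "\<not> linear_code M C"
    using max_linear_subcode_eq_if_linear[OF assms(1,3)] assms(4) by metis
  then have "2 * card Cmax < 2 ^ j * card Cmax"
    using card_f2_span_gt[OF assms(1,2) linX XC closed assms(4)[symmetric]] j by simp
  then have "2 ^ 1 < (2::nat) ^ j" using X0 by simp
  then have "2 \<le> j" using power_strict_increasing_iff[of "2::nat" 1 j] by simp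
  moreover have "2 ^ j * card Cmax \<le> 2 ^ (n - 1) * card Cmax"
    using card_f2_span_le[OF assms(1,2) linX XC closed assms(5)] j by simp
  then have "j \<le> n - 1" using X0 by simp
  moreover have "code_dim ?S = j + code_dim Cmax"
    using j card_linear_code_eq_code_dim[OF fX linX]
    by (intro code_dim_eq) (simp add: power_add)
  ultimately show ?thesis by simp
qed

theorem lemma2p10:
  fixes M :: "'a set" and C Cmax :: "'a set set" and n :: nat
  assumes "finite M"
    and "is_code M C"
    and "completely_transitive M C"
    and "{} \<in> C"
    and "min_dist C \<ge> 5"
    and "is_max_linear_subcode M C Cmax"
    and "2 \<le> code_dim Cmax" and "code_dim Cmax \<le> card M - 2"
    and "C \<noteq> Cmax"
    and "card C = n * card Cmax"
  shows "aut_code M C \<subseteq> aut_code M (f2_span M C)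
       \<and> completely_transitive M (f2_span M C)
       \<and> 2 \<le> code_dim (f2_span M C) - code_dim Cmax
       \<and> code_dim (f2_span M C) - code_dim Cmax \<le> n - 1"
proof -
  have C: "C \<subseteq> Pow M" using assms(2) unfolding is_code_def by blast
  show ?thesis
    using aut_code_subset_aut_code_f2_span[OF assms(1) C assms(4)]
      completely_transitive_f2_span[OF assms(1) C assms(4,3)]
      codim_max_linear_subcode_in_f2_span[OF assms(1) C assms(6,9,10)]
    by blast
qed

end
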